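(* Let $\mathbf{x}$ be generated by an additive noise model $x_i=f_i(\mathbf{x}_{\mathrm{pa}(i)})+\epsilon_i$ over a DAG $\mathcal{G}$ with mutually independent $\epsilon_i\sim\mathcal{N}(0,\sigma^2)$, $\sigma^2>0$, and $f_i$ twice continuously differentiable, with all expectations below finite. Let $H(\mathbf{x})=-\nabla^2_{\mathbf{x}}\log p(\mathbf{x})$, let $l$ be a sink (leaf) node of $\mathcal{G}$, and for a symmetric matrix $M$ indexed by $\{1,\dots,d\}$ with $M_{ll}\neq 0$ let $\mathrm{Schur}(M)=M_{\setminus l,\setminus l}-M_{\setminus l,l}M_{ll}^{-1}M_{l,\setminus l}$. Then $$\Delta := \mathbb{E}[\mathrm{Schur}(H(\mathbf{x}))] - \mathrm{Schur}(\mathbb{E}[H(\mathbf{x})]) = -\frac{1}{\sigma^2}\,\mathrm{Cov}_{p(\mathbf{x})}\!\left(\nabla_{\mathbf{x}_{\setminus l}} f_l(\mathbf{x}_{\mathrm{pa}(l)})\right).$$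
   Context: $\mathrm{pa}(i)$ denotes the parents of node $i$ in $\mathcal{G}$; $p$ is the joint density of $\mathbf{x}$. $M_{\setminus l,\setminus l}$ is the submatrix with row and column $l$ removed, $M_{\setminus l,l}$ the $l$-th column with entry $l$ removed, $M_{l,\setminus l}$ the $l$-th row with entry $l$ removed. $\nabla_{\mathbf{x}_{\setminus l}} f_l$ is the gradient of $f_l$ (viewed as a function of $\mathbf{x}_{\setminus l}$) and $\mathrm{Cov}$ its covariance matrix under $p$. *)

theory Defs
  imports "HOL-Analysis.Analysis" "HOL-Probability.Probability"
begin

definition pd :: "(real ^ 'n \<Rightarrow> real) \<Rightarrow> 'n \<Rightarrow> real ^ 'n \<Rightarrow> real" where
  "pd g j x = frechet_derivative g (at x) (axis j 1)"

definition hess :: "(real ^ 'n \<Rightarrow> real) \<Rightarrow> real ^ 'n \<Rightarrow> 'n \<Rightarrow> 'n \<Rightarrow> real" where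
  "hess g x j k = pd (\<lambda>y. pd g k y) j x"

definition C2 :: "(real ^ 'n \<Rightarrow> real) \<Rightarrow> bool" where
  "C2 g \<longleftrightarrow> (\<forall>x. g differentiable (at x))
     \<and> (\<forall>j x. (pd g j) differentiable (at x))
     \<and> (\<forall>j. continuous_on UNIV (pd g j))
     \<and> (\<forall>j k. continuous_on UNIV (pd (pd g j) k))"

text \<open>Schur complement of the (l,l) entry of a matrix M indexed by 'n; only the
  entries with indices j,k different from l are meaningful.\<close>
definition schur :: "'n \<Rightarrow> ('n \<Rightarrow> 'n \<Rightarrow> real) \<Rightarrow> 'n \<Rightarrow> 'n \<Rightarrow> real" where
  "schur l M j k = M j k - M j l * inverse (M l l) * M l k"

definition depends_only_on :: "(real ^ 'n \<Rightarrow> real) \<Rightarrow> 'n set \<Rightarrow> bool" where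
  "depends_only_on g S \<longleftrightarrow> (\<forall>x y. (\<forall>j\<in>S. x $ j = y $ j) \<longrightarrow> g x = g y)"

definition dag_edges :: "('n \<Rightarrow> 'n set) \<Rightarrow> ('n \<times> 'n) set" where
  "dag_edges pa = {(j, i). j \<in> pa i}"

end

theory Submission
  imports Defs
begin

(* Because every f_i depends only on the parents of i and the graph is acyclic, the residual map
   x |-> (x_i - f_i x)_i factors, by peeling off sinks, into shears x_s |-> x_s - f_s x whose
   shift does not depend on x_s; each shear preserves Lebesgue measure, so X has the density
   prod_i phi_sigma(x_i - f_i x), and by continuity p equals it everywhere.  Since l is a sink,
   x_l enters log p only through -(x_l - f_l x)^2/(2 sigma^2), hence H_ll = 1/sigma^2 and
   H_jl = H_lj = -(d_j f_l)/sigma^2.  With a constant pivot, Schur(H)_jk is H_jk minus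
   sigma^2 H_jl H_lk, so the expectation gap is -sigma^2 Cov(H_jl, H_lk) = -Cov(d_j f_l, d_k f_l)/sigma^2. *)

section \<open>Shears and the density of an additive noise model\<close>

abbreviation lborel_Pi :: "('n::finite \<Rightarrow> real) measure" where
  "lborel_Pi \<equiv> PiM UNIV (\<lambda>_. lborel)"

lemma space_lborel_Pi [simp]: "space lborel_Pi = UNIV"
  by (simp add: space_PiM)

lemma product_sigma_finite_lborel: "product_sigma_finite (\<lambda>_::'n. lborel :: real measure)"
  by (simp add: product_sigma_finite_def lborel.sigma_finite_measure_axioms)

lemma borel_measurable_vec_lambda [measurable]:
  "(vec_lambda :: ('n::finite \<Rightarrow> real) \<Rightarrow> real ^ 'n) \<in> borel_measurable lborel_Pi"
proof (subst borel_measurable_euclidean_space, intro ballI)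
  fix b :: "real ^ 'n" assume "b \<in> Basis"
  then obtain i where "b = axis i 1" by (auto simp: Basis_vec_def)
  then show "(\<lambda>x. vec_lambda x \<bullet> b) \<in> borel_measurable lborel_Pi"
    by (simp flip: cart_eq_inner_axis)
qed

lemma lborel_eq_distr_vec_lambda: "lborel = distr lborel_Pi borel (vec_lambda :: _ \<Rightarrow> real ^ 'n::finite)"
proof (rule lborel_eqI)
  interpret product_sigma_finite "\<lambda>_::'n. lborel :: real measure"
    by (rule product_sigma_finite_lborel)
  fix a b :: "real ^ 'n" assume "\<And>i. i \<in> Basis \<Longrightarrow> a \<bullet> i \<le> b \<bullet> i"
  then have le: "a $ i \<le> b $ i" for i
    by (auto simp: Basis_vec_def cart_eq_inner_axis)
  have "vec_lambda -` box a b \<inter> space lborel_Pi = PiE UNIV (\<lambda>i. {a $ i <..< b $ i})"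
    by (auto simp: mem_box_cart PiE_iff)
  then have "emeasure (distr lborel_Pi borel vec_lambda) (box a b)
      = emeasure lborel_Pi (PiE UNIV (\<lambda>i. {a $ i <..< b $ i}))"
    by (simp add: emeasure_distr)
  also have "\<dots> = (\<Prod>i\<in>UNIV. ennreal (b $ i - a $ i))"
    using le by (subst emeasure_PiM) auto
  also have "\<dots> = ennreal (\<Prod>i\<in>Basis. (b - a) \<bullet> i)"
    using le by (simp add: prod_ennreal Basis_vec_def cart_eq_inner_axis axis_eq_axis
        prod.UNION_disjoint inner_diff_left)
  finally show "emeasure (distr lborel_Pi borel vec_lambda) (box a b) = (\<Prod>i\<in>Basis. (b - a) \<bullet> i)"
    by simp
qed simp

definition shear :: "'n \<Rightarrow> (('n \<Rightarrow> real) \<Rightarrow> real) \<Rightarrow> ('n \<Rightarrow> real) \<Rightarrow> 'n \<Rightarrow> real" where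
  "shear s c x = x(s := x s + c x)"

lemma measurable_shear [measurable]:
  "c \<in> borel_measurable lborel_Pi \<Longrightarrow> shear s c \<in> measurable lborel_Pi lborel_Pi"
  unfolding shear_def by (rule measurable_PiM_single') (auto split: if_splits)

lemma shear_uminus_shear:
  assumes "\<And>x y. c (x(s := y)) = c x"
  shows "shear s (\<lambda>x. - c x) (shear s c x) = x"
  using assms[of x "x s + c x"] by (auto simp: shear_def)

lemma distr_shear_lborel_Pi:
  fixes c :: "('n::finite \<Rightarrow> real) \<Rightarrow> real"
  assumes [measurable]: "c \<in> borel_measurable lborel_Pi"
    and c_indep: "\<And>x y. c (x(s := y)) = c x"
  shows "distr lborel_Pi lborel_Pi (shear s c) = lborel_Pi"
proof (rule measure_eqI)
  interpret product_sigma_finite "\<lambda>_::'n. lborel :: real measure"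
    by (rule product_sigma_finite_lborel)
  have U: "(UNIV :: 'n set) = insert s (UNIV - {s})" by auto
  fix A assume "A \<in> sets (distr lborel_Pi lborel_Pi (shear s c))"
  then have [measurable]: "A \<in> sets lborel_Pi" by simp
  have fibre: "(\<integral>\<^sup>+y. indicator A (shear s c (x(s := y))) \<partial>lborel) = (\<integral>\<^sup>+y. indicator A (x(s := y)) \<partial>lborel)"
    for x :: "'n \<Rightarrow> real"
  proof -
    have [measurable]: "(\<lambda>y. x(s := y)) \<in> measurable borel lborel_Pi"
      by (rule measurable_PiM_single') auto
    have "(\<integral>\<^sup>+y. indicator A (x(s := y)) \<partial>lborel) = (\<integral>\<^sup>+y. indicator A (x(s := c x + y)) \<partial>lborel)"
      using nn_integral_real_affine[of "\<lambda>y. indicator A (x(s := y))" 1 "c x"] by simp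
    then show ?thesis
      by (simp add: shear_def c_indep add.commute)
  qed
  have "emeasure (distr lborel_Pi lborel_Pi (shear s c)) A
      = (\<integral>\<^sup>+x. indicator A x \<partial>distr lborel_Pi lborel_Pi (shear s c))"
    by simp
  also have "\<dots> = (\<integral>\<^sup>+x. indicator A (shear s c x) \<partial>lborel_Pi)"
    by (rule nn_integral_distr) measurable
  also have "\<dots> = (\<integral>\<^sup>+x. (\<integral>\<^sup>+y. indicator A (shear s c (x(s := y))) \<partial>lborel) \<partial>PiM (UNIV - {s}) (\<lambda>_. lborel))"
    by (subst U, subst product_nn_integral_insert) (auto simp flip: U)
  also have "\<dots> = (\<integral>\<^sup>+x. (\<integral>\<^sup>+y. indicator A (x(s := y)) \<partial>lborel) \<partial>PiM (UNIV - {s}) (\<lambda>_. lborel))"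
    by (simp add: fibre)
  also have "\<dots> = (\<integral>\<^sup>+x. indicator A x \<partial>lborel_Pi)"
    by (subst (2) U, subst product_nn_integral_insert) (auto simp flip: U)
  finally show "emeasure (distr lborel_Pi lborel_Pi (shear s c)) A = emeasure lborel_Pi A"
    by simp
qed simp

lemma acyclic_dag_edges_obtain_sink:
  fixes pa :: "'n::finite \<Rightarrow> 'n set"
  assumes "acyclic (dag_edges pa)" and "S \<noteq> {}"
  obtains s where "s \<in> S" and "\<And>i. i \<in> S \<Longrightarrow> s \<notin> pa i"
proof -
  have "wf ((dag_edges pa)\<inverse>)"
    using finite_acyclic_wf_converse[OF finite assms(1)] .
  with assms(2) obtain s where "s \<in> S" "\<And>i. (i, s) \<in> (dag_edges pa)\<inverse> \<Longrightarrow> i \<notin> S"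
    unfolding wf_eq_minimal by blast
  then show thesis by (intro that) (auto simp: dag_edges_def)
qed

lemma depends_only_on_update:
  assumes "depends_only_on g S" and "l \<notin> S" and "\<And>j. j \<noteq> l \<Longrightarrow> x $ j = y $ j"
  shows "g x = g y"
  using assms unfolding depends_only_on_def by metis

definition residual_map :: "('n::finite \<Rightarrow> real ^ 'n \<Rightarrow> real) \<Rightarrow> 'n set \<Rightarrow> ('n \<Rightarrow> real) \<Rightarrow> 'n \<Rightarrow> real"
  where "residual_map f S x = (\<lambda>i. if i \<in> S then x i - f i (vec_lambda x) else x i)"

lemma measurable_residual_map:
  assumes "\<And>i. f i \<in> borel_measurable borel"
  shows "residual_map f S \<in> measurable lborel_Pi lborel_Pi"
  unfolding residual_map_def
  by (rule measurable_PiM_single') (use assms in \<open>auto intro!: measurable_compose[OF borel_measurable_vec_lambda]\<close>)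

lemma residual_map_remove_sink:
  assumes dep: "\<And>i. depends_only_on (f i) (pa i)"
    and "s \<in> S" and sink: "\<And>i. i \<in> S \<Longrightarrow> s \<notin> pa i"
  shows "residual_map f S = residual_map f (S - {s}) \<circ> shear s (\<lambda>x. - f s (vec_lambda x))"
proof -
  have upd: "f i (vec_lambda (x(s := y))) = f i (vec_lambda x)" if "i \<in> S" for i x y
    using sink[OF that] by (intro depends_only_on_update[OF dep]) auto
  show ?thesis
  proof (intro ext)
    fix x i
    show "residual_map f S x i = (residual_map f (S - {s}) \<circ> shear s (\<lambda>x. - f s (vec_lambda x))) x i"
      using \<open>s \<in> S\<close> upd[of i] upd[of s] by (auto simp: residual_map_def shear_def)
  qed
qed

lemma residual_map_measure_preserving:
  fixes f :: "'n::finite \<Rightarrow> real ^ 'n \<Rightarrow> real" and pa :: "'n \<Rightarrow> 'n set"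
  assumes dag: "acyclic (dag_edges pa)"
    and dep: "\<And>i. depends_only_on (f i) (pa i)"
    and fm: "\<And>i. f i \<in> borel_measurable borel"
  shows "distr lborel_Pi lborel_Pi (residual_map f S) = lborel_Pi
    \<and> (\<exists>U \<in> measurable lborel_Pi lborel_Pi. \<forall>x. U (residual_map f S x) = x)"
  using finite[of S]
proof (induction S rule: finite_psubset_induct)
  case (psubset S)
  show ?case
  proof (cases "S = {}")
    case True
    then have "residual_map f S = id" by (auto simp: residual_map_def)
    then show ?thesis by (auto simp: distr_id2 id_def)
  next
    case False
    then obtain s where s: "s \<in> S" "\<And>i. i \<in> S \<Longrightarrow> s \<notin> pa i"
      using acyclic_dag_edges_obtain_sink[OF dag] by blast
    define c where "c x = - f s (vec_lambda x)" for x
    have [measurable]: "c \<in> borel_measurable lborel_Pi"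
      unfolding c_def by (intro borel_measurable_uminus measurable_compose[OF borel_measurable_vec_lambda fm])
    have c_indep: "c (x(s := y)) = c x" for x y
      unfolding c_def using s by (intro arg_cong[of _ _ uminus] depends_only_on_update[OF dep]) auto
    obtain U where U: "U \<in> measurable lborel_Pi lborel_Pi" "\<And>x. U (residual_map f (S - {s}) x) = x"
      and D: "distr lborel_Pi lborel_Pi (residual_map f (S - {s})) = lborel_Pi"
      using psubset.IH[of "S - {s}"] s by auto
    have decomp: "residual_map f S = residual_map f (S - {s}) \<circ> shear s c"
      unfolding c_def by (rule residual_map_remove_sink[OF dep s])
    have "distr lborel_Pi lborel_Pi (residual_map f S)
        = distr (distr lborel_Pi lborel_Pi (shear s c)) lborel_Pi (residual_map f (S - {s}))"
      unfolding decomp by (rule distr_distr[symmetric]) (auto intro: measurable_residual_map fm)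
    also have "\<dots> = lborel_Pi"
      using D by (simp add: distr_shear_lborel_Pi c_indep)
    finally have "distr lborel_Pi lborel_Pi (residual_map f S) = lborel_Pi" .
    moreover have "shear s (\<lambda>x. - c x) \<circ> U \<in> measurable lborel_Pi lborel_Pi"
      using U(1) by (rule measurable_comp) measurable
    moreover have "\<forall>x. (shear s (\<lambda>x. - c x) \<circ> U) (residual_map f S x) = x"
      using U(2) shear_uminus_shear[of c s, OF c_indep] by (simp add: decomp)
    ultimately show ?thesis by blast
  qed
qed

lemma distr_eq_density_comp_left_inverse:
  assumes T: "T \<in> measurable N N" "distr N N T = N"
    and U: "U \<in> measurable N N" "\<And>x. x \<in> space N \<Longrightarrow> U (T x) = x"
    and Y: "Y \<in> measurable M N"
    and \<rho>: "\<rho> \<in> borel_measurable N"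
    and TY: "distr M N (\<lambda>\<omega>. T (Y \<omega>)) = density N \<rho>"
  shows "distr M N Y = density N (\<lambda>x. \<rho> (T x))"
proof -
  have "distr M N Y = distr M N (\<lambda>\<omega>. U (T (Y \<omega>)))"
    using Y U(2) by (intro distr_cong) (auto simp: measurable_space)
  also have "\<dots> = distr (distr M N (\<lambda>\<omega>. T (Y \<omega>))) N U"
    using T U Y by (subst distr_distr) (auto simp: comp_def)
  also have "distr M N (\<lambda>\<omega>. T (Y \<omega>)) = distr (density N (\<lambda>x. \<rho> (T x))) N T"
    unfolding TY using T \<rho> by (simp flip: density_distr)
  also have "distr (distr (density N (\<lambda>x. \<rho> (T x))) N T) N U
      = distr (density N (\<lambda>x. \<rho> (T x))) N (\<lambda>x. U (T x))"
    using T U \<rho> by (subst distr_distr) (auto simp: comp_def)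
  also have "\<dots> = density N (\<lambda>x. \<rho> (T x))"
    using U(2) by (subst distr_cong[where g = id]) (auto simp: distr_id2 id_def)
  finally show ?thesis .
qed

lemma indicator_PiE_UNIV:
  fixes x :: "'n::finite \<Rightarrow> 'b"
  shows "(\<Prod>i\<in>UNIV. indicator (A i) (x i) :: ennreal) = indicator (PiE UNIV A) x"
  by (auto simp: indicator_def PiE_iff)

lemma distr_indep_vars_eq_density_PiM:
  fixes Z :: "'n::finite \<Rightarrow> 'a \<Rightarrow> real"
  assumes "prob_space M"
    and dist: "\<And>i. distributed M lborel (Z i) (g i)"
    and indep: "prob_space.indep_vars M (\<lambda>_. borel) Z UNIV"
  shows "distr M lborel_Pi (\<lambda>\<omega> i. Z i \<omega>) = density lborel_Pi (\<lambda>x. \<Prod>i\<in>UNIV. g i (x i))"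
proof -
  interpret prob_space M by fact
  interpret L: product_sigma_finite "\<lambda>_::'n. lborel :: real measure"
    by (rule product_sigma_finite_lborel)
  have [measurable]: "Z i \<in> borel_measurable M" "g i \<in> borel_measurable borel" for i
    using dist[of i] by (auto simp: distributed_def)
  have distr_Z: "distr M borel (Z i) = density lborel (g i)" for i
    using dist[of i] by (simp add: distributed_def cong: distr_cong)
  interpret PS: product_sigma_finite "\<lambda>i. distr M borel (Z i)"
    unfolding product_sigma_finite_def by (auto intro!: prob_space_imp_sigma_finite prob_space_distr)
  have "distr M lborel_Pi (\<lambda>\<omega> i. Z i \<omega>) = distr M (PiM UNIV (\<lambda>_. borel)) (\<lambda>\<omega>. \<lambda>i\<in>UNIV. Z i \<omega>)"
    by (rule distr_cong) (auto intro!: sets_PiM_cong)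
  also have "\<dots> = PiM UNIV (\<lambda>i. distr M borel (Z i))"
    using indep_vars_iff_distr_eq_PiM[where I = UNIV and M' = "\<lambda>_. borel" and X = Z] indep by auto
  also have "\<dots> = density lborel_Pi (\<lambda>x. \<Prod>i\<in>UNIV. g i (x i))"
  proof (rule PS.PiM_eqI[symmetric])
    fix A assume "\<And>i. i \<in> UNIV \<Longrightarrow> A i \<in> sets (distr M borel (Z i))"
    then have [measurable]: "A i \<in> sets borel" for i by auto
    have "emeasure (density lborel_Pi (\<lambda>x. \<Prod>i\<in>UNIV. g i (x i))) (PiE UNIV A)
        = (\<integral>\<^sup>+x. (\<Prod>i\<in>UNIV. g i (x i) * indicator (A i) (x i)) \<partial>lborel_Pi)"
      by (subst emeasure_density) (auto intro: sets_PiM_I_finite simp: prod.distrib indicator_PiE_UNIV)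
    also have "\<dots> = (\<Prod>i\<in>UNIV. \<integral>\<^sup>+y. g i y * indicator (A i) y \<partial>lborel)"
      by (rule L.product_nn_integral_prod) auto
    also have "\<dots> = (\<Prod>i\<in>UNIV. emeasure (distr M borel (Z i)) (A i))"
      by (simp add: distr_Z emeasure_density)
    finally show "emeasure (density lborel_Pi (\<lambda>x. \<Prod>i\<in>UNIV. g i (x i))) (PiE UNIV A)
        = (\<Prod>i\<in>UNIV. emeasure (distr M borel (Z i)) (A i))" .
  qed (auto intro!: sets_PiM_cong)
  finally show ?thesis .
qed

lemma anm_distributed:
  fixes M :: "'a measure" and pa :: "'n::finite \<Rightarrow> 'n set"
    and f :: "'n \<Rightarrow> real ^ 'n \<Rightarrow> real" and Z :: "'n \<Rightarrow> 'a \<Rightarrow> real"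
    and X :: "'a \<Rightarrow> real ^ 'n" and g :: "'n \<Rightarrow> real \<Rightarrow> ennreal"
  assumes "prob_space M"
    and dag: "acyclic (dag_edges pa)"
    and dep: "\<And>i. depends_only_on (f i) (pa i)"
    and fm [measurable]: "\<And>i. f i \<in> borel_measurable borel"
    and dist: "\<And>i. distributed M lborel (Z i) (g i)"
    and indep: "prob_space.indep_vars M (\<lambda>_. borel) Z UNIV"
    and Xm [measurable]: "X \<in> borel_measurable M"
    and anm: "\<And>\<omega> i. \<omega> \<in> space M \<Longrightarrow> X \<omega> $ i = f i (X \<omega>) + Z i \<omega>"
  shows "distributed M lborel X (\<lambda>v. \<Prod>i\<in>UNIV. g i (v $ i - f i v))"
proof -
  have [measurable]: "g i \<in> borel_measurable borel" for i
    using dist[of i] by (simp add: distributed_def)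
  define q where "q v = (\<Prod>i\<in>UNIV. g i (v $ i - f i v))" for v :: "real ^ 'n"
  have qm [measurable]: "q \<in> borel_measurable borel"
    unfolding q_def by measurable
  define T where "T = residual_map f UNIV"
  have Tm: "T \<in> measurable lborel_Pi lborel_Pi"
    unfolding T_def using fm by (rule measurable_residual_map)
  obtain U where "distr lborel_Pi lborel_Pi T = lborel_Pi"
    and "U \<in> measurable lborel_Pi lborel_Pi" and "\<And>x. U (T x) = x"
    using residual_map_measure_preserving[OF dag dep fm] unfolding T_def by blast
  moreover define Y where "Y \<omega> = vec_nth (X \<omega>)" for \<omega>
  moreover have "Y \<in> measurable M lborel_Pi"
    unfolding Y_def
    by (rule measurable_PiM_single') (auto intro: measurable_compose[OF Xm borel_measurable_nth])
  moreover have "distr M lborel_Pi (\<lambda>\<omega>. T (Y \<omega>)) = density lborel_Pi (\<lambda>x. \<Prod>i\<in>UNIV. g i (x i))"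
  proof -
    have "T (Y \<omega>) = (\<lambda>i. Z i \<omega>)" if "\<omega> \<in> space M" for \<omega>
      using anm[OF that] by (auto simp: T_def Y_def residual_map_def vec_nth_inverse)
    then have "distr M lborel_Pi (\<lambda>\<omega>. T (Y \<omega>)) = distr M lborel_Pi (\<lambda>\<omega> i. Z i \<omega>)"
      by (intro distr_cong) auto
    also have "\<dots> = density lborel_Pi (\<lambda>x. \<Prod>i\<in>UNIV. g i (x i))"
      by (rule distr_indep_vars_eq_density_PiM) fact+
    finally show ?thesis .
  qed
  ultimately have distr_Y: "distr M lborel_Pi Y = density lborel_Pi (\<lambda>x. q (vec_lambda x))"
    using Tm by (subst distr_eq_density_comp_left_inverse[where T = T and U = U])
      (auto simp: q_def T_def residual_map_def)
  have "distr M lborel X = distr M borel (\<lambda>\<omega>. vec_lambda (Y \<omega>))"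
    by (rule distr_cong) (auto simp: Y_def vec_nth_inverse)
  also have "\<dots> = distr (density lborel_Pi (\<lambda>x. q (vec_lambda x))) borel vec_lambda"
    using \<open>Y \<in> measurable M lborel_Pi\<close>
    by (subst distr_Y[symmetric], subst distr_distr) (auto simp: comp_def)
  also have "\<dots> = density lborel q"
    by (simp add: density_distr[symmetric] lborel_eq_distr_vec_lambda[symmetric])
  finally show ?thesis
    using qm unfolding distributed_def q_def[abs_def] by simp
qed

lemma (in prob_space) distributed_continuous_density_unique:
  fixes X :: "'a \<Rightarrow> 'b::euclidean_space"
  assumes "distributed M lborel X (\<lambda>x. ennreal (p x))" and "distributed M lborel X (\<lambda>x. ennreal (q x))"
    and "continuous_on UNIV p" and "continuous_on UNIV q" and q_pos: "\<And>x. q x > 0"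
  shows "p x = q x"
proof -
  (* Positivity of q is needed: ennreal sends every negative value of p to 0. *)
  have "AE x in lborel. ennreal (p x) = ennreal (q x)"
    using distributed_unique[OF assms(1,2)] .
  then have "AE x in lborel. p x = q x"
    by eventually_elim (metis ennreal_eq_0_iff ennreal_inj less_le_not_le nle_le q_pos)
  then have "AE x in lebesgue. x \<in> {x. p x = q x}"
    by (intro AE_completion) simp
  then show ?thesis
    using mem_closed_if_AE_lebesgue[OF closed_Collect_eq[OF assms(3,4)]] by blast
qed

lemma ln_normal_density:
  assumes "\<sigma> > 0"
  shows "ln (normal_density \<mu> \<sigma> z) = - ln (sqrt (2 * pi * \<sigma>\<^sup>2)) - (z - \<mu>)\<^sup>2 / (2 * \<sigma>\<^sup>2)"
  using assms by (simp add: normal_density_def ln_mult ln_div)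

lemma gaussian_anm_ln_density:
  fixes M :: "'a measure" and pa :: "'n::finite \<Rightarrow> 'n set"
    and f :: "'n \<Rightarrow> real ^ 'n \<Rightarrow> real" and eps :: "'n \<Rightarrow> 'a \<Rightarrow> real"
    and X :: "'a \<Rightarrow> real ^ 'n" and p :: "real ^ 'n \<Rightarrow> real"
  assumes prob: "prob_space M"
    and dag: "acyclic (dag_edges pa)"
    and dep: "\<And>i. depends_only_on (f i) (pa i)"
    and f_cont: "\<And>i. continuous_on UNIV (f i)"
    and sigma_pos: "\<sigma> > 0"
    and eps_gauss: "\<And>i. distributed M lborel (eps i) (\<lambda>t. ennreal (normal_density 0 \<sigma> t))"
    and eps_indep: "prob_space.indep_vars M (\<lambda>_. borel) eps UNIV"
    and X_rv: "X \<in> borel_measurable M"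
    and anm: "\<And>\<omega> i. \<omega> \<in> space M \<Longrightarrow> X \<omega> $ i = f i (X \<omega>) + eps i \<omega>"
    and p_density: "distributed M lborel X (\<lambda>x. ennreal (p x))"
    and p_cont: "continuous_on UNIV p"
  shows "(\<lambda>y. ln (p y)) = (\<lambda>y. \<Sum>i\<in>UNIV. - ln (sqrt (2 * pi * \<sigma>\<^sup>2)) - (y $ i - f i y)\<^sup>2 / (2 * \<sigma>\<^sup>2))"
proof -
  define q where "q v = (\<Prod>i\<in>UNIV. normal_density 0 \<sigma> (v $ i - f i v))" for v :: "real ^ 'n"
  have q_pos: "q v > 0" for v
    unfolding q_def using sigma_pos by (auto intro!: prod_pos normal_density_pos)
  have "continuous_on UNIV q"
    unfolding q_def normal_density_def using sigma_pos
    by (intro continuous_intros f_cont linear_continuous_on[OF bounded_linear_vec_nth]) auto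
  moreover have "distributed M lborel X (\<lambda>v. ennreal (q v))"
    using anm_distributed[OF prob dag dep _ eps_gauss eps_indep X_rv anm] f_cont
    by (simp add: q_def prod_ennreal borel_measurable_continuous_onI)
  ultimately have "p y = q y" for y
    using q_pos by (intro prob_space.distributed_continuous_density_unique[OF prob p_density _ p_cont])
  then show ?thesis
    using sigma_pos
    by (simp add: q_def ln_prod normal_density_pos ln_normal_density less_imp_neq[symmetric])
qed


section \<open>Partial derivatives of the Gaussian log-likelihood\<close>

lemma has_real_derivative_pd:
  fixes g :: "real ^ 'n::finite \<Rightarrow> real"
  assumes "g differentiable (at y)"
  shows "((\<lambda>t. g (y + t *\<^sub>R axis k 1)) has_real_derivative pd g k y) (at 0)"
proof -
  let ?D = "frechet_derivative g (at y)"
  have line: "((\<lambda>t. y + t *\<^sub>R axis k 1) has_derivative (\<lambda>t. t *\<^sub>R axis k 1)) (at 0)"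
    by (auto intro!: derivative_eq_intros)
  have "(g has_derivative ?D) (at (y + 0 *\<^sub>R axis k 1))"
    using assms[unfolded frechet_derivative_works] by simp
  then have "((\<lambda>t. g (y + t *\<^sub>R axis k 1)) has_derivative (\<lambda>t. ?D (t *\<^sub>R axis k 1))) (at 0)"
    using diff_chain_at[OF line] by (simp add: o_def)
  moreover have "(\<lambda>t. ?D (t *\<^sub>R axis k 1)) = (*) (pd g k y)"
    using assms by (auto simp: pd_def linear_scale has_derivative_linear frechet_derivative_works)
  ultimately show ?thesis
    by (simp add: has_field_derivative_def)
qed

lemma pd_eqI:
  fixes g :: "real ^ 'n::finite \<Rightarrow> real"
  assumes "g differentiable (at y)" and "((\<lambda>t. g (y + t *\<^sub>R axis k 1)) has_real_derivative D) (at 0)"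
  shows "pd g k y = D"
  using DERIV_unique has_real_derivative_pd[OF assms(1)] assms(2) by blast

lemma pd_eq_0_if_depends_only_on:
  fixes g :: "real ^ 'n::finite \<Rightarrow> real"
  assumes "depends_only_on g S" and "l \<notin> S" and "g differentiable (at x)"
  shows "pd g l x = 0"
proof (rule pd_eqI[OF assms(3)])
  have "g (x + t *\<^sub>R axis l 1) = g x" for t
    using assms(1,2) by (rule depends_only_on_update) (simp add: axis_def)
  then show "((\<lambda>t. g (x + t *\<^sub>R axis l 1)) has_real_derivative 0) (at 0)"
    by simp
qed

lemma depends_only_on_pd:
  fixes g :: "real ^ 'n::finite \<Rightarrow> real"
  assumes "depends_only_on g S" and "\<And>z. g differentiable (at z)"
  shows "depends_only_on (pd g k) S"
  unfolding depends_only_on_def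
proof (intro allI impI)
  fix x y :: "real ^ 'n" assume "\<forall>j\<in>S. x $ j = y $ j"
  then have "g (x + t *\<^sub>R axis k 1) = g (y + t *\<^sub>R axis k 1)" for t
    using assms(1) by (auto simp: depends_only_on_def)
  then show "pd g k x = pd g k y"
    using has_real_derivative_pd[OF assms(2), of y k] by (intro pd_eqI[OF assms(2)]) simp
qed

lemma has_real_derivative_axis_line_nth:
  "((\<lambda>t. (y + t *\<^sub>R axis k 1) $ i) has_real_derivative axis k 1 $ i) (at 0)"
  by (auto intro!: derivative_eq_intros)

lemma differentiable_vec_nth [derivative_intros]: "(\<lambda>y. y $ i) differentiable F"
  by (rule bounded_linear_imp_differentiable[OF bounded_linear_vec_nth])

lemma pd_gaussian_loglik:
  fixes f :: "'n::finite \<Rightarrow> real ^ 'n \<Rightarrow> real"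
  assumes diff: "\<And>i z. f i differentiable (at z)" and "\<sigma> \<noteq> 0"
  shows "pd (\<lambda>y. \<Sum>i\<in>UNIV. K - (y $ i - f i y)\<^sup>2 / (2 * \<sigma>\<^sup>2)) k y
    = (\<Sum>i\<in>UNIV. - (y $ i - f i y) * (axis k 1 $ i - pd (f i) k y) / \<sigma>\<^sup>2)"
proof (rule pd_eqI)
  show "(\<lambda>y. \<Sum>i\<in>UNIV. K - (y $ i - f i y)\<^sup>2 / (2 * \<sigma>\<^sup>2)) differentiable (at y)"
    using diff \<open>\<sigma> \<noteq> 0\<close> by (auto intro!: derivative_intros)
  have "((\<lambda>t. K - ((y + t *\<^sub>R axis k 1) $ i - f i (y + t *\<^sub>R axis k 1))\<^sup>2 / (2 * \<sigma>\<^sup>2))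
      has_real_derivative - (y $ i - f i y) * (axis k 1 $ i - pd (f i) k y) / \<sigma>\<^sup>2) (at 0)" for i
  proof -
    have "((\<lambda>t. (y + t *\<^sub>R axis k 1) $ i - f i (y + t *\<^sub>R axis k 1))
        has_real_derivative axis k 1 $ i - pd (f i) k y) (at 0)"
      by (rule DERIV_diff[OF has_real_derivative_axis_line_nth has_real_derivative_pd[OF diff]])
    from DERIV_diff[OF DERIV_const[of K] DERIV_cdivide[OF DERIV_power[OF this, of 2], of "2 * \<sigma>\<^sup>2"]]
    show ?thesis
      by (rule DERIV_cong) (use \<open>\<sigma> \<noteq> 0\<close> in \<open>simp add: field_simps power2_eq_square\<close>)
  qed
  then show "((\<lambda>t. \<Sum>i\<in>UNIV. K - ((y + t *\<^sub>R axis k 1) $ i - f i (y + t *\<^sub>R axis k 1))\<^sup>2 / (2 * \<sigma>\<^sup>2))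
      has_real_derivative (\<Sum>i\<in>UNIV. - (y $ i - f i y) * (axis k 1 $ i - pd (f i) k y) / \<sigma>\<^sup>2)) (at 0)"
    by (rule DERIV_sum)
qed

lemma hess_gaussian_loglik_sink:
  fixes f :: "'n::finite \<Rightarrow> real ^ 'n \<Rightarrow> real" and pa :: "'n \<Rightarrow> 'n set" and K \<sigma> :: real
  assumes diff: "\<And>i z. f i differentiable (at z)"
    and diff2: "\<And>i k z. pd (f i) k differentiable (at z)"
    and dep: "\<And>i. depends_only_on (f i) (pa i)"
    and sink: "\<And>i. l \<notin> pa i"
    and sigma: "\<sigma> \<noteq> 0"
  defines "G \<equiv> \<lambda>y. \<Sum>i\<in>UNIV. K - (y $ i - f i y)\<^sup>2 / (2 * \<sigma>\<^sup>2)"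
  shows "hess G x j l = (pd (f l) j x - axis j 1 $ l) / \<sigma>\<^sup>2"
    and "hess G x l j = (pd (f l) j x - axis j 1 $ l) / \<sigma>\<^sup>2"
    and "hess G x l l = - 1 / \<sigma>\<^sup>2"
proof -
  have pd_l: "pd (f i) l y = 0" for i y
    using dep sink diff by (rule pd_eq_0_if_depends_only_on)
  have pd_G: "pd G k y = (\<Sum>i\<in>UNIV. - (y $ i - f i y) * (axis k 1 $ i - pd (f i) k y) / \<sigma>\<^sup>2)" for k y
    unfolding G_def using diff sigma by (rule pd_gaussian_loglik)
  have pd_G_l: "(\<lambda>y. pd G l y) = (\<lambda>y. - (y $ l - f l y) / \<sigma>\<^sup>2)"
    unfolding pd_G pd_l
    by (simp add: axis_def if_distrib[of "\<lambda>a. _ * a"] sum_divide_distrib[symmetric] cong: if_cong)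
  have col: "hess G x a l = (pd (f l) a x - axis a 1 $ l) / \<sigma>\<^sup>2" for a
    unfolding hess_def pd_G_l
  proof (rule pd_eqI)
    show "(\<lambda>y. - (y $ l - f l y) / \<sigma>\<^sup>2) differentiable (at x)"
      using diff sigma by (auto intro!: derivative_intros)
    show "((\<lambda>t. - ((x + t *\<^sub>R axis a 1) $ l - f l (x + t *\<^sub>R axis a 1)) / \<sigma>\<^sup>2)
        has_real_derivative (pd (f l) a x - axis a 1 $ l) / \<sigma>\<^sup>2) (at 0)"
      using DERIV_cdivide[OF DERIV_minus[OF DERIV_diff[OF has_real_derivative_axis_line_nth
            has_real_derivative_pd[OF diff]]], where c = "\<sigma>\<^sup>2"]
      by simp
  qed
  then show "hess G x j l = (pd (f l) j x - axis j 1 $ l) / \<sigma>\<^sup>2" .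
  show "hess G x l l = - 1 / \<sigma>\<^sup>2"
    using col[of l] by (simp add: pd_l)
  have "pd G j (x + t *\<^sub>R axis l 1)
      = (\<Sum>i\<in>UNIV. - ((x + t *\<^sub>R axis l 1) $ i - f i x) * (axis j 1 $ i - pd (f i) j x) / \<sigma>\<^sup>2)" for t
  proof -
    have "f i (x + t *\<^sub>R axis l 1) = f i x" for i
      by (rule depends_only_on_update[OF dep sink]) (simp add: axis_def)
    moreover have "pd (f i) j (x + t *\<^sub>R axis l 1) = pd (f i) j x" for i
      by (rule depends_only_on_update[OF depends_only_on_pd[OF dep diff] sink]) (simp add: axis_def)
    ultimately show ?thesis by (simp add: pd_G)
  qed
  moreover have "((\<lambda>t. \<Sum>i\<in>UNIV. - ((x + t *\<^sub>R axis l 1) $ i - f i x) * (axis j 1 $ i - pd (f i) j x) / \<sigma>\<^sup>2)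
      has_real_derivative (\<Sum>i\<in>UNIV. - (axis l 1 $ i) * (axis j 1 $ i - pd (f i) j x) / \<sigma>\<^sup>2)) (at 0)"
  proof (rule DERIV_sum)
    fix i
    have "((\<lambda>t. (x + t *\<^sub>R axis l 1) $ i - f i x) has_real_derivative axis l 1 $ i) (at 0)"
      using DERIV_diff[OF has_real_derivative_axis_line_nth DERIV_const] by simp
    from DERIV_cdivide[OF DERIV_cmult_right[OF DERIV_minus[OF this]], where c = "\<sigma>\<^sup>2"]
    show "((\<lambda>t. - ((x + t *\<^sub>R axis l 1) $ i - f i x) * (axis j 1 $ i - pd (f i) j x) / \<sigma>\<^sup>2)
        has_real_derivative - (axis l 1 $ i) * (axis j 1 $ i - pd (f i) j x) / \<sigma>\<^sup>2) (at 0)" .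
  qed
  moreover have "pd G j differentiable (at y)" for y
    unfolding pd_G using diff diff2 sigma by (auto intro!: derivative_intros)
  ultimately have "hess G x l j = (\<Sum>i\<in>UNIV. - (axis l 1 $ i) * (axis j 1 $ i - pd (f i) j x) / \<sigma>\<^sup>2)"
    unfolding hess_def by (intro pd_eqI) simp_all
  also have "\<dots> = (\<Sum>i\<in>UNIV. if i = l then (pd (f l) j x - axis j 1 $ l) / \<sigma>\<^sup>2 else 0)"
    by (rule sum.cong) (auto simp: axis_def diff_divide_distrib)
  also have "\<dots> = (pd (f l) j x - axis j 1 $ l) / \<sigma>\<^sup>2"
    by simp
  finally show "hess G x l j = (pd (f l) j x - axis j 1 $ l) / \<sigma>\<^sup>2" .
qed

section \<open>Expected Schur complements\<close>

lemma schur_expectation_gap: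
  fixes H :: "'a \<Rightarrow> 'n \<Rightarrow> 'n \<Rightarrow> real"
  assumes "prob_space M"
    and pivot: "\<And>\<omega>. \<omega> \<in> space M \<Longrightarrow> H \<omega> l l = c"
    and int_jk: "integrable M (\<lambda>\<omega>. H \<omega> j k)"
    and int_prod: "integrable M (\<lambda>\<omega>. H \<omega> j l * H \<omega> l k)"
  shows "(\<integral>\<omega>. schur l (H \<omega>) j k \<partial>M) - schur l (\<lambda>a b. \<integral>\<omega>. H \<omega> a b \<partial>M) j k
    = - ((\<integral>\<omega>. H \<omega> j l * H \<omega> l k \<partial>M) - (\<integral>\<omega>. H \<omega> j l \<partial>M) * (\<integral>\<omega>. H \<omega> l k \<partial>M)) / c"
proof -
  interpret prob_space M by fact
  have "(\<integral>\<omega>. H \<omega> l l \<partial>M) = c"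
    using pivot by (simp add: Bochner_Integration.integral_cong[OF refl pivot] prob_space)
  moreover have "(\<integral>\<omega>. schur l (H \<omega>) j k \<partial>M) = (\<integral>\<omega>. H \<omega> j k - H \<omega> j l * H \<omega> l k / c \<partial>M)"
    using pivot by (intro Bochner_Integration.integral_cong) (auto simp: schur_def divide_inverse ac_simps)
  moreover have "\<dots> = (\<integral>\<omega>. H \<omega> j k \<partial>M) - (\<integral>\<omega>. H \<omega> j l * H \<omega> l k \<partial>M) / c"
    using int_jk int_prod by simp
  ultimately show ?thesis
    by (simp add: schur_def divide_inverse algebra_simps)
qed

theorem proposition3p4:
  fixes M :: "'a measure"
    and pa :: "'n::finite \<Rightarrow> 'n set"
    and f :: "'n \<Rightarrow> real ^ 'n \<Rightarrow> real"
    and eps :: "'n \<Rightarrow> 'a \<Rightarrow> real"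
    and X :: "'a \<Rightarrow> real ^ 'n"
    and p :: "real ^ 'n \<Rightarrow> real"
    and \<sigma> :: real
    and l :: 'n
  assumes prob: "prob_space M"
    and dag: "acyclic (dag_edges pa)"
    and f_pa: "\<And>i. depends_only_on (f i) (pa i)"
    and f_C2: "\<And>i. C2 (f i)"
    and sigma_pos: "\<sigma> > 0"
    and eps_gauss: "\<And>i. distributed M lborel (eps i) (\<lambda>t. ennreal (normal_density 0 \<sigma> t))"
    and eps_indep: "prob_space.indep_vars M (\<lambda>_. borel) eps UNIV"
    and X_rv: "X \<in> borel_measurable M"
    and anm: "\<And>\<omega> i. \<omega> \<in> space M \<Longrightarrow> X \<omega> $ i = f i (X \<omega>) + eps i \<omega>"
    and p_density: "distributed M lborel X (\<lambda>x. ennreal (p x))"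
    and p_cont: "continuous_on UNIV p"
    and sink: "\<And>i. l \<notin> pa i"
    and int_H: "\<And>j k. integrable M (\<lambda>\<omega>. - hess (\<lambda>y. ln (p y)) (X \<omega>) j k)"
    and int_SH: "\<And>j k. integrable M
        (\<lambda>\<omega>. schur l (\<lambda>a b. - hess (\<lambda>y. ln (p y)) (X \<omega>) a b) j k)"
    and int_g: "\<And>j. integrable M (\<lambda>\<omega>. pd (f l) j (X \<omega>))"
    and int_gg: "\<And>j k. integrable M (\<lambda>\<omega>. pd (f l) j (X \<omega>) * pd (f l) k (X \<omega>))"
  shows "\<forall>j k. j \<noteq> l \<longrightarrow> k \<noteq> l \<longrightarrow>
     (let H = (\<lambda>x a b. - hess (\<lambda>y. ln (p y)) x a b);
          E = (\<lambda>g. integral\<^sup>L M g);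
          Delta = E (\<lambda>\<omega>. schur l (H (X \<omega>)) j k)
                  - schur l (\<lambda>a b. E (\<lambda>\<omega>. H (X \<omega>) a b)) j k;
          Cov = E (\<lambda>\<omega>. pd (f l) j (X \<omega>) * pd (f l) k (X \<omega>))
                - E (\<lambda>\<omega>. pd (f l) j (X \<omega>)) * E (\<lambda>\<omega>. pd (f l) k (X \<omega>))
      in Delta = - (1 / \<sigma>\<^sup>2) * Cov)"
proof (intro allI impI, unfold Let_def)
  fix j k assume "j \<noteq> l" "k \<noteq> l"
  have diff: "\<And>i z. f i differentiable (at z)" and diff2: "\<And>i k z. pd (f i) k differentiable (at z)"
    using f_C2 unfolding C2_def by blast+
  have f_cont: "continuous_on UNIV (f i)" for i
    using diff by (simp add: differentiable_imp_continuous_on differentiable_on_def)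
  have ln_p: "(\<lambda>y. ln (p y)) = (\<lambda>y. \<Sum>i\<in>UNIV. - ln (sqrt (2 * pi * \<sigma>\<^sup>2)) - (y $ i - f i y)\<^sup>2 / (2 * \<sigma>\<^sup>2))"
    by (rule gaussian_anm_ln_density[OF prob dag f_pa f_cont sigma_pos eps_gauss eps_indep X_rv _ p_density
          p_cont]) (fact anm)
  define H where "H x a b = - hess (\<lambda>y. ln (p y)) x a b" for x a b
  note hess_ln_p = hess_gaussian_loglik_sink[where f = f and K = "- ln (sqrt (2 * pi * \<sigma>\<^sup>2))",
      OF diff diff2 f_pa sink sigma_pos[THEN less_imp_neq, THEN not_sym], folded ln_p]
  have H_ll: "H x l l = 1 / \<sigma>\<^sup>2"
    and H_jl: "H x j l = - pd (f l) j x / \<sigma>\<^sup>2" and H_lk: "H x l k = - pd (f l) k x / \<sigma>\<^sup>2" for x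
    using hess_ln_p[where x = x] \<open>j \<noteq> l\<close> \<open>k \<noteq> l\<close> by (auto simp: H_def axis_def)
  have int_jk: "integrable M (\<lambda>\<omega>. H (X \<omega>) j k)"
    using int_H by (simp add: H_def)
  have int_prod: "integrable M (\<lambda>\<omega>. H (X \<omega>) j l * H (X \<omega>) l k)"
    using int_gg[of j k] by (simp add: H_jl H_lk)
  have "(\<integral>\<omega>. schur l (H (X \<omega>)) j k \<partial>M) - schur l (\<lambda>a b. \<integral>\<omega>. H (X \<omega>) a b \<partial>M) j k
    = - ((\<integral>\<omega>. H (X \<omega>) j l * H (X \<omega>) l k \<partial>M) - (\<integral>\<omega>. H (X \<omega>) j l \<partial>M) * (\<integral>\<omega>. H (X \<omega>) l k \<partial>M))
      / (1 / \<sigma>\<^sup>2)"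
    by (rule schur_expectation_gap[OF prob _ int_jk int_prod]) (simp add: H_ll)
  also have "\<dots> = - (1 / \<sigma>\<^sup>2) * ((\<integral>\<omega>. pd (f l) j (X \<omega>) * pd (f l) k (X \<omega>) \<partial>M)
      - (\<integral>\<omega>. pd (f l) j (X \<omega>) \<partial>M) * (\<integral>\<omega>. pd (f l) k (X \<omega>) \<partial>M))"
    using sigma_pos by (simp add: H_jl H_lk field_simps eval_nat_numeral)
  finally show "(\<integral>\<omega>. schur l (\<lambda>a b. - hess (\<lambda>y. ln (p y)) (X \<omega>) a b) j k \<partial>M)
      - schur l (\<lambda>a b. \<integral>\<omega>. - hess (\<lambda>y. ln (p y)) (X \<omega>) a b \<partial>M) j k
    = - (1 / \<sigma>\<^sup>2) * ((\<integral>\<omega>. pd (f l) j (X \<omega>) * pd (f l) k (X \<omega>) \<partial>M)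
      - (\<integral>\<omega>. pd (f l) j (X \<omega>) \<partial>M) * (\<integral>\<omega>. pd (f l) k (X \<omega>) \<partial>M))"
    unfolding H_def .
qed

end
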